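(* Let $G$ be a connected graph of minimum degree at least three and let $(A,B)$ be a partition of $V(G)$ with $A\neq\emptyset$ and $B\neq\emptyset$. Let $C$ be any cycle in $G$. Then, unless $G$ is bipartite with bipartition $(A,B)$ (i.e. every edge of $G$ has one end in $A$ and the other in $B$), for every integer $\ell$ with $1\leq \ell<|V(C)|$ there is an $A$-$B$ path of length $\ell$ in $G$.
   Context: Graphs are finite and simple. An $A$-$B$ path is a path with one end in $A$ and the other end in $B$. The length of a path is its number of edges. *)

theory Defs
  imports Main
begin

definition simple_graph :: "'a set \<Rightarrow> ('a \<Rightarrow> 'a \<Rightarrow> bool) \<Rightarrow> bool" where
  "simple_graph V E \<longleftrightarrow> finite V \<and> (\<forall>x y. E x y \<longrightarrow> x \<in> V \<and> y \<in> V)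
     \<and> (\<forall>x y. E x y \<longrightarrow> E y x) \<and> (\<forall>x. \<not> E x x)"

fun walk_edges :: "('a \<Rightarrow> 'a \<Rightarrow> bool) \<Rightarrow> 'a list \<Rightarrow> bool" where
  "walk_edges E (x # y # xs) = (E x y \<and> walk_edges E (y # xs))"
| "walk_edges E _ = True"

definition is_path :: "'a set \<Rightarrow> ('a \<Rightarrow> 'a \<Rightarrow> bool) \<Rightarrow> 'a list \<Rightarrow> bool" where
  "is_path V E p \<longleftrightarrow> p \<noteq> [] \<and> distinct p \<and> set p \<subseteq> V \<and> walk_edges E p"

definition path_length :: "'a list \<Rightarrow> nat" where
  "path_length p = length p - 1"

definition is_AB_path :: "'a set \<Rightarrow> ('a \<Rightarrow> 'a \<Rightarrow> bool) \<Rightarrow> 'a set \<Rightarrow> 'a set \<Rightarrow> 'a list \<Rightarrow> bool" where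
  "is_AB_path V E A B p \<longleftrightarrow> is_path V E p \<and>
     ((hd p \<in> A \<and> last p \<in> B) \<or> (hd p \<in> B \<and> last p \<in> A))"

definition is_cycle :: "'a set \<Rightarrow> ('a \<Rightarrow> 'a \<Rightarrow> bool) \<Rightarrow> 'a list \<Rightarrow> bool" where
  "is_cycle V E c \<longleftrightarrow> length c \<ge> 3 \<and> distinct c \<and> set c \<subseteq> V \<and> walk_edges E c
     \<and> E (last c) (hd c)"

definition connected_graph :: "'a set \<Rightarrow> ('a \<Rightarrow> 'a \<Rightarrow> bool) \<Rightarrow> bool" where
  "connected_graph V E \<longleftrightarrow> V \<noteq> {} \<and>
     (\<forall>x\<in>V. \<forall>y\<in>V. \<exists>p. is_path V E p \<and> hd p = x \<and> last p = y)"

definition degree :: "'a set \<Rightarrow> ('a \<Rightarrow> 'a \<Rightarrow> bool) \<Rightarrow> 'a \<Rightarrow> nat" where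
  "degree V E x = card {y \<in> V. E x y}"

definition bipartite_with :: "('a \<Rightarrow> 'a \<Rightarrow> bool) \<Rightarrow> 'a set \<Rightarrow> 'a set \<Rightarrow> bool" where
  "bipartite_with E A B \<longleftrightarrow> (\<forall>x y. E x y \<longrightarrow> (x \<in> A \<and> y \<in> B) \<or> (x \<in> B \<and> y \<in> A))"

end

theory Submission
  imports Defs
begin

(* Suppose there is no A-B path of length l. Colour each vertex by whether it lies in A and index
   the vertices of C cyclically by the integers. Walking l steps along C shows that the colouring
   of C has period l, hence also period |C| - l. A third neighbour of a cycle vertex c_i, off C or
   at the far end of a chord, yields paths of length l through c_i which force c_(i-1) and c_(i+1)
   to have the same colour; so the colouring of C is constant or alternating. Cutting a path from
   an arbitrary vertex to C into pieces of length l carries this over to every edge of G: either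
   all edges are monochromatic, impossible in a connected graph meeting both A and B, or all edges
   join A to B and G is bipartite with bipartition (A,B). *)

section \<open>Walks and paths\<close>

lemma walk_edges_Cons: "walk_edges E (x # xs) = (xs = [] \<or> (E x (hd xs) \<and> walk_edges E xs))"
  by (cases xs) auto

lemma walk_edges_append:
  "walk_edges E (xs @ ys) =
     (walk_edges E xs \<and> walk_edges E ys \<and> (xs \<noteq> [] \<longrightarrow> ys \<noteq> [] \<longrightarrow> E (last xs) (hd ys)))"
  by (induction xs) (auto simp: walk_edges_Cons)

lemma walk_edges_rev:
  assumes "\<And>x y. E x y \<Longrightarrow> E y x"
  shows "walk_edges E (rev xs) = walk_edges E xs"
  by (induction xs) (auto simp: walk_edges_Cons walk_edges_append hd_rev last_rev intro: assms)

lemma walk_edges_nth: "walk_edges E xs \<Longrightarrow> i + 1 < length xs \<Longrightarrow> E (xs ! i) (xs ! (i + 1))"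
proof (induction xs arbitrary: i)
  case (Cons x xs)
  then show ?case by (cases i) (auto simp: walk_edges_Cons hd_conv_nth)
qed simp

lemma walk_edges_take: "walk_edges E xs \<Longrightarrow> walk_edges E (take k xs)"
  by (metis append_take_drop_id walk_edges_append)

lemma walk_edges_drop: "walk_edges E xs \<Longrightarrow> walk_edges E (drop k xs)"
  by (metis append_take_drop_id walk_edges_append)

lemma is_path_take: "is_path V E p \<Longrightarrow> 0 < k \<Longrightarrow> is_path V E (take k p)"
  unfolding is_path_def using walk_edges_take set_take_subset by fastforce

lemma is_path_drop: "is_path V E p \<Longrightarrow> k < length p \<Longrightarrow> is_path V E (drop k p)"
  unfolding is_path_def using walk_edges_drop set_drop_subset by fastforce

lemma path_first_entry:
  assumes "is_path V E p" "last p \<in> S"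
  shows "\<exists>q. is_path V E q \<and> hd q = hd p \<and> last q \<in> S \<and> set q \<subseteq> set p
           \<and> (\<forall>x\<in>set (butlast q). x \<notin> S)"
  using assms
proof (induction p)
  case (Cons x xs)
  show ?case
  proof (cases "x \<in> S \<or> xs = []")
    case True
    then have "is_path V E [x]" using Cons.prems by (auto simp: is_path_def)
    then show ?thesis using True Cons.prems by (intro exI[of _ "[x]"]) auto
  next
    case False
    have "is_path V E xs" "last xs \<in> S" using Cons.prems False by (auto simp: is_path_def walk_edges_Cons)
    then obtain q where q: "is_path V E q" "hd q = hd xs" "last q \<in> S" "set q \<subseteq> set xs"
      "\<forall>x\<in>set (butlast q). x \<notin> S" using Cons.IH by blast
    have "q \<noteq> []" "x \<notin> set q" using q(1,4) Cons.prems(1) by (auto simp: is_path_def)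
    then have "is_path V E (x # q)" using q Cons.prems(1) False by (auto simp: is_path_def walk_edges_Cons)
    then show ?thesis using q \<open>q \<noteq> []\<close> False by (intro exI[of _ "x # q"]) auto
  qed
qed (simp add: is_path_def)

lemma walk_edges_crossing_edge:
  assumes "walk_edges E p" "p \<noteq> []" "hd p \<in> S" "last p \<notin> S"
  shows "\<exists>u v. E u v \<and> u \<in> S \<and> v \<notin> S"
  using assms
proof (induction p)
  case (Cons x xs)
  then show ?case by (cases xs) (auto simp: walk_edges_Cons split: if_splits)
qed simp

lemma connected_graph_crossing_edge:
  assumes "connected_graph V E" "a \<in> V" "b \<in> V" "a \<in> S" "b \<notin> S"
  shows "\<exists>u v. E u v \<and> u \<in> S \<and> v \<notin> S"
proof -
  obtain p where "is_path V E p" "hd p = a" "last p = b"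
    using assms(1-3) by (auto simp: connected_graph_def)
  then show ?thesis using walk_edges_crossing_edge[of E p S] assms(4,5) by (auto simp: is_path_def)
qed

lemma hd_upto: "a \<le> b \<Longrightarrow> hd [a..b] = a"
  by (simp add: upto_rec1)

lemma last_upto: "a \<le> b \<Longrightarrow> last [a..b] = b"
  by (simp add: upto_rec2)

section \<open>Periodic functions on the integers\<close>

lemma periodic_int_mod:
  fixes g :: "int \<Rightarrow> 'b"
  assumes "d > 0" and per: "\<And>t. g (t + d) = g t"
  shows "g t = g (t mod d)"
proof -
  have shift: "g (s + k * d) = g s" for s k
  proof (induction k rule: int_induct[where k = 0])
    case (step1 k)
    then show ?case using per[of "s + k * d"] by (simp add: algebra_simps)
  next
    case (step2 k)
    then show ?case using per[of "s + (k - 1) * d"] by (simp add: algebra_simps)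
  qed simp
  show ?thesis using shift[of "t mod d" "t div d"] by simp
qed

lemma periodic_int_reflection:
  fixes g :: "int \<Rightarrow> 'b"
  assumes "p > 0" and per: "\<And>t. g (t + p) = g t"
    and window: "\<And>x. k \<le> x \<Longrightarrow> x < k + p \<Longrightarrow> g (u + x) = g (v - x)"
  shows "g (u + x) = g (v - x)"
proof -
  define h where "h s \<longleftrightarrow> g (u + (k + s)) = g (v - (k + s))" for s
  have "h (s + p) = h s" for s
    using per[of "u + (k + s)"] per[of "v - (k + s) - p"] by (simp add: h_def algebra_simps)
  then have "h (x - k) = h ((x - k) mod p)" using periodic_int_mod[OF \<open>p > 0\<close>] by blast
  moreover have "h ((x - k) mod p)" using window \<open>p > 0\<close> by (simp add: h_def)
  ultimately show ?thesis by (simp add: h_def)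
qed

section \<open>Graphs in which all paths of length l stay on one side\<close>

locale same_side_paths =
  fixes V :: "'a set" and E :: "'a \<Rightarrow> 'a \<Rightarrow> bool" and A :: "'a set" and C :: "'a list" and l :: nat
  assumes simple: "simple_graph V E"
    and connected: "connected_graph V E"
    and degree_ge_3: "\<forall>x\<in>V. degree V E x \<ge> 3"
    and cycle: "is_cycle V E C"
    and l_ge_1: "1 \<le> l" and l_less: "l < length C"
    and same_side: "\<And>p. is_path V E p \<Longrightarrow> path_length p = l \<Longrightarrow> (hd p \<in> A \<longleftrightarrow> last p \<in> A)"
begin

abbreviation n where "n \<equiv> length C"

definition cv :: "int \<Rightarrow> 'a" where "cv t = C ! nat (t mod int n)"

definition colour :: "int \<Rightarrow> bool" where "colour t \<longleftrightarrow> cv t \<in> A"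

definition path_to_cycle :: "'a list \<Rightarrow> int \<Rightarrow> bool" where
  "path_to_cycle q r \<longleftrightarrow> is_path V E q \<and> last q = cv r \<and> (\<forall>x\<in>set (butlast q). x \<notin> set C)"

lemma E_sym: "E x y \<Longrightarrow> E y x"
  using simple by (auto simp: simple_graph_def)

lemma E_in_V: "E x y \<Longrightarrow> x \<in> V \<and> y \<in> V"
  using simple by (auto simp: simple_graph_def)

lemma E_irrefl: "\<not> E x x"
  using simple by (auto simp: simple_graph_def)

lemma n_ge_3: "n \<ge> 3"
  using cycle by (simp add: is_cycle_def)

lemma C_nonempty: "C \<noteq> []"
  using n_ge_3 by auto

lemma n_pos: "0 < int n"
  using n_ge_3 by linarith

lemma cv_index_less: "nat (t mod int n) < n"
  using n_pos by (simp add: nat_less_iff)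

lemma cv_in_cycle: "cv t \<in> set C"
  using cv_index_less by (simp add: cv_def)

lemma cv_in_V: "cv t \<in> V"
  using cv_in_cycle cycle by (auto simp: is_cycle_def)

lemma cv_nth: "i < n \<Longrightarrow> cv (int i) = C ! i"
  by (simp add: cv_def)

lemma cv_eq_iff: "cv s = cv t \<longleftrightarrow> s mod int n = t mod int n"
proof -
  have "distinct C" using cycle by (simp add: is_cycle_def)
  then have "cv s = cv t \<longleftrightarrow> nat (s mod int n) = nat (t mod int n)"
    unfolding cv_def using nth_eq_iff_index_eq cv_index_less by blast
  also have "\<dots> \<longleftrightarrow> s mod int n = t mod int n"
    using n_pos by (simp add: eq_nat_nat_iff)
  finally show ?thesis .
qed

lemma cv_inj_on_window: "inj_on cv {lo..<lo + int n}"
proof (rule inj_onI)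
  fix s t assume "s \<in> {lo..<lo + int n}" "t \<in> {lo..<lo + int n}" "cv s = cv t"
  then have "int n dvd s - t" "\<bar>s - t\<bar> < int n"
    by (simp_all add: cv_eq_iff mod_eq_dvd_iff abs_less_iff)
  then show "s = t" using dvd_imp_le_int[of "s - t" "int n"] by linarith
qed

lemma cv_offset:
  assumes "w \<in> set C"
  obtains j where "0 \<le> j" "j < int n" "cv (a + j) = w"
proof -
  obtain m where m: "m < n" "C ! m = w" using assms by (auto simp: in_set_conv_nth)
  define j where "j = (int m - a) mod int n"
  have "cv (a + j) = cv (int m)" unfolding cv_eq_iff j_def by (simp add: mod_add_right_eq)
  then show ?thesis using that[of j] m cv_nth n_pos by (simp add: j_def)
qed

lemma cv_edge: "E (cv t) (cv (t + 1))"
proof -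
  define i where "i = nat (t mod int n)"
  have i: "i < n" "int i = t mod int n" using cv_index_less n_pos by (simp_all add: i_def)
  have succ: "(t + 1) mod int n = (int i + 1) mod int n" using i(2) by (simp add: mod_add_left_eq)
  show ?thesis
  proof (cases "i + 1 < n")
    case True
    then have "(t + 1) mod int n = int (i + 1)" using succ by simp
    then have "cv (t + 1) = C ! (i + 1)" by (metis cv_def nat_int)
    then show ?thesis using walk_edges_nth[of E C i] cycle True by (simp add: is_cycle_def cv_def i_def)
  next
    case False
    then have i_last: "i = n - 1" using i by simp
    then have "int i + 1 = int n" using n_ge_3 by linarith
    then have "(t + 1) mod int n = 0" using succ by simp
    then have "cv t = last C" "cv (t + 1) = hd C" using C_nonempty i_last
      by (simp_all add: cv_def i_def[symmetric] last_conv_nth hd_conv_nth)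
    then show ?thesis using cycle by (simp add: is_cycle_def)
  qed
qed

lemma walk_edges_arc: "walk_edges E (map cv [a..b])"
proof (induction a b rule: upto.induct)
  case (1 i j)
  show ?case
  proof (cases "i + 1 \<le> j")
    case True
    then show ?thesis using 1 by (simp add: upto_rec1[of i j] upto_rec1[of "i + 1" j] walk_edges_Cons cv_edge)
  next
    case False
    then have "[i..j] = [] \<or> [i..j] = [i]" by (cases "i = j") auto
    then show ?thesis by auto
  qed
qed

lemma walk_edges_rev_arc: "walk_edges E (map cv (rev [a..b]))"
  using walk_edges_arc walk_edges_rev[of E, OF E_sym] by (metis rev_map)

lemma path_to_cycle_singleton: "path_to_cycle [cv t] t"
  using cv_in_V by (simp add: path_to_cycle_def is_path_def)

lemma colour_path_then_cycle_walk:
  assumes q: "path_to_cycle q (hd ts)"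
    and ts: "ts \<noteq> []" "distinct ts" "set ts \<subseteq> {lo..<lo + int n}" "walk_edges E (map cv ts)"
    and len: "length q + length ts = l + 2"
  shows "(hd q \<in> A) \<longleftrightarrow> colour (last ts)"
proof -
  have q_path: "is_path V E q" and q_last: "last q = cv (hd ts)"
    and q_off: "\<forall>x\<in>set (butlast q). x \<notin> set C"
    using q by (simp_all add: path_to_cycle_def)
  have q_split: "q = butlast q @ [last q]" using q_path by (simp add: is_path_def)
  let ?p = "butlast q @ map cv ts"
  have "inj_on cv (set ts)" using cv_inj_on_window ts(3) by (rule inj_on_subset)
  then have "distinct ?p"
    using distinct_butlast q_path ts(2) q_off cv_in_cycle by (auto simp: distinct_map is_path_def)
  moreover have "set ?p \<subseteq> V"
    using q_path cv_in_V by (auto simp: is_path_def dest: in_set_butlastD)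
  moreover have "walk_edges E ?p"
  proof -
    have "walk_edges E (butlast q @ [last q])" using q_path q_split by (simp add: is_path_def)
    then show ?thesis using ts(1,4) q_last by (simp add: walk_edges_append hd_map)
  qed
  ultimately have "is_path V E ?p" using ts(1) by (simp add: is_path_def)
  moreover have "path_length ?p = l"
  proof -
    have "0 < length q" "0 < length ts" using q_path ts(1) by (auto simp: is_path_def)
    then show ?thesis
      unfolding path_length_def length_append length_butlast length_map using len by linarith
  qed
  moreover have "hd ?p = hd q"
    using q_split ts(1) q_last by (cases "butlast q") (auto simp: hd_map)
  moreover have "last ?p = cv (last ts)" using ts(1) by (simp add: last_map)
  ultimately show ?thesis using same_side[of ?p] by (simp add: colour_def)
qed

lemma colour_cycle_walk:
  assumes "ts \<noteq> []" "distinct ts" "set ts \<subseteq> {lo..<lo + int n}" "walk_edges E (map cv ts)"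
    and "length ts = l + 1"
  shows "colour (hd ts) \<longleftrightarrow> colour (last ts)"
  using colour_path_then_cycle_walk[OF path_to_cycle_singleton assms(1-4)] assms(5)
  by (simp add: colour_def)

lemma colour_add_l: "colour (t + int l) \<longleftrightarrow> colour t"
proof -
  have "{t..t + int l} \<subseteq> {t..<t + int n}" using l_less by auto
  then show ?thesis
    using colour_cycle_walk[of "[t..t + int l]" t] by (simp add: walk_edges_arc hd_upto last_upto)
qed

lemma colour_add_n: "colour (t + int n) \<longleftrightarrow> colour t"
proof -
  have "cv (t + int n) = cv t" by (simp add: cv_eq_iff)
  then show ?thesis by (simp add: colour_def)
qed

lemma colour_add_n_minus_l: "colour (t + (int n - int l)) \<longleftrightarrow> colour t"
  using colour_add_l[of "t + (int n - int l)"] colour_add_n[of t] by (simp add: algebra_simps)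

lemma colour_two_cycle_walks:
  assumes "xs \<noteq> []" "ys \<noteq> []" "distinct (xs @ ys)" "set (xs @ ys) \<subseteq> {lo..<lo + int n}"
    and "walk_edges E (map cv xs)" "walk_edges E (map cv ys)" "E (cv (last xs)) (cv (hd ys))"
    and "length xs + length ys = l + 1"
  shows "colour (hd xs) \<longleftrightarrow> colour (last ys)"
  using colour_cycle_walk[of "xs @ ys" lo] assms by (simp add: walk_edges_append last_map hd_map)

lemma colour_chord_down_up:
  assumes "E (cv a) (cv (a + j))" "0 \<le> x" "x < j" "0 \<le> y" "j + y < int n" "x + y + 1 = int l"
  shows "colour (a + x) \<longleftrightarrow> colour (a + j + y)"
proof -
  have "colour (hd (rev [a..a + x])) \<longleftrightarrow> colour (last ([a + j..a + j + y]))"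
    by (rule colour_two_cycle_walks[where lo=a])
      (use assms in \<open>auto simp: walk_edges_arc walk_edges_rev_arc nat_add_distrib hd_rev last_rev hd_upto last_upto\<close>)
  then show ?thesis using assms by (simp add: hd_rev last_rev hd_upto last_upto)
qed

lemma colour_chord_up_down:
  assumes "E (cv a) (cv (a + j))" "0 \<le> x" "0 \<le> y" "y < j" "j + x < int n" "x + y + 1 = int l"
  shows "colour (a - x) \<longleftrightarrow> colour (a + j - y)"
proof -
  have "colour (hd ([a - x..a])) \<longleftrightarrow> colour (last (rev [a + j - y..a + j]))"
    by (rule colour_two_cycle_walks[where lo="a - x"])
      (use assms in \<open>auto simp: walk_edges_arc walk_edges_rev_arc nat_add_distrib hd_rev last_rev hd_upto last_upto\<close>)
  then show ?thesis using assms by (simp add: hd_rev last_rev hd_upto last_upto)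
qed

lemma colour_chord_up_up:
  assumes "E (cv a) (cv (a + j))" "0 \<le> x" "0 < j" "0 \<le> y" "x + j + y < int n" "x + y + 1 = int l"
  shows "colour (a - x) \<longleftrightarrow> colour (a + j + y)"
proof -
  have "colour (hd ([a - x..a])) \<longleftrightarrow> colour (last ([a + j..a + j + y]))"
    by (rule colour_two_cycle_walks[where lo="a - x"])
      (use assms in \<open>auto simp: walk_edges_arc walk_edges_rev_arc nat_add_distrib hd_rev last_rev hd_upto last_upto\<close>)
  then show ?thesis using assms by (simp add: hd_rev last_rev hd_upto last_upto)
qed

lemma colour_chord_down_down:
  assumes "E (cv a) (cv (a + j))" "0 \<le> x" "0 \<le> y" "x + y < j" "j < int n" "x + y + 1 = int l"
  shows "colour (a + x) \<longleftrightarrow> colour (a + j - y)"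
proof -
  have "colour (hd (rev [a..a + x])) \<longleftrightarrow> colour (last (rev [a + j - y..a + j]))"
    by (rule colour_two_cycle_walks[where lo=a])
      (use assms in \<open>auto simp: walk_edges_arc walk_edges_rev_arc nat_add_distrib hd_rev last_rev hd_upto last_upto\<close>)
  then show ?thesis using assms by (simp add: hd_rev last_rev hd_upto last_upto)
qed

lemma third_neighbour:
  assumes "v \<in> V"
  obtains w where "E v w" "w \<noteq> x" "w \<noteq> y"
proof -
  let ?N = "{z \<in> V. E v z}"
  have "card ?N \<ge> 3" using degree_ge_3 assms by (auto simp: degree_def)
  moreover have "card {x, y} \<le> 2" by (simp add: card_insert_le_m1)
  ultimately have "\<not> ?N \<subseteq> {x, y}" using card_mono[of "{x, y}" ?N] by auto
  then show ?thesis using that by blast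
qed

lemma colour_around_off_cycle_neighbour:
  assumes "E (cv i) w" "w \<notin> set C"
  shows "colour (i - 1) \<longleftrightarrow> colour (i + 1)"
proof -
  have q: "path_to_cycle [w, cv i] t" if "cv t = cv i" for t
    using assms E_sym[OF assms(1)] E_in_V[OF assms(1)] cv_in_cycle that
    by (auto simp: path_to_cycle_def is_path_def)
  have "hd [w, cv i] \<in> A \<longleftrightarrow> colour (last [i..i + int l - 1])"
    by (rule colour_path_then_cycle_walk[OF q, where lo=i])
      (use l_ge_1 l_less in \<open>auto simp: hd_upto walk_edges_arc\<close>)
  then have "w \<in> A \<longleftrightarrow> colour (i - 1)"
    using l_ge_1 colour_add_l[of "i - 1"] by (simp add: last_upto algebra_simps)
  moreover have "hd [w, cv i] \<in> A \<longleftrightarrow> colour (last (rev [i - int l + 1..i]))"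
    by (rule colour_path_then_cycle_walk[OF q, where lo="i - int l + 1"])
      (use l_ge_1 l_less in \<open>auto simp: hd_upto hd_rev last_upto walk_edges_rev_arc\<close>)
  then have "w \<in> A \<longleftrightarrow> colour (i + 1)"
    using l_ge_1 colour_add_l[of "i - int l + 1"] by (simp add: last_rev hd_upto algebra_simps)
  ultimately show ?thesis by simp
qed

lemma colour_around_long_chord:
  assumes chord: "E (cv i) (cv (i + j))" and long: "int n - int l < j" "j < int l"
  shows "colour (i - 1) \<longleftrightarrow> colour (i + 1)"
proof -
  define p where "p = int n - int l"
  have "p > 0" using l_less by (simp add: p_def)
  have per: "colour (t + p) \<longleftrightarrow> colour t" for t
    using colour_add_n_minus_l by (simp add: p_def)
  \<comment> \<open>Both reflections hold on p consecutive values, and p is a period of the colouring.\<close>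
  have reflect_lower: "colour (i + x) \<longleftrightarrow> colour (i + j - 1 - x)" for x
  proof (rule periodic_int_reflection[where g = colour and k = "j - p", OF \<open>p > 0\<close> per])
    fix x assume "j - p \<le> x" "x < j - p + p"
    then have "colour (i + x) \<longleftrightarrow> colour (i + j + (int l - 1 - x))"
      using long by (intro colour_chord_down_up[OF chord]) (auto simp: p_def)
    also have "\<dots> \<longleftrightarrow> colour (i + j - 1 - x)"
      using colour_add_l[of "i + j - 1 - x"] by (simp add: algebra_simps)
    finally show "colour (i + x) \<longleftrightarrow> colour (i + j - 1 - x)" .
  qed
  have reflect_upper: "colour (i + j + 1 + x) \<longleftrightarrow> colour (i - x)" for x
  proof (rule periodic_int_reflection[where g = colour and k = "int l - j", OF \<open>p > 0\<close> per])
    fix x assume "int l - j \<le> x" "x < int l - j + p"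
    then have "colour (i - x) \<longleftrightarrow> colour (i + j - (int l - 1 - x))"
      using long by (intro colour_chord_up_down[OF chord]) (auto simp: p_def)
    also have "\<dots> \<longleftrightarrow> colour (i + j + 1 + x)"
      using colour_add_l[of "i + j - (int l - 1 - x)"] by (simp add: algebra_simps)
    finally show "colour (i + j + 1 + x) \<longleftrightarrow> colour (i - x)" by simp
  qed
  show ?thesis using reflect_lower[of "-1"] reflect_upper[of "-1"] by simp
qed

lemma colour_around_chord:
  assumes chord: "E (cv i) (cv (i + j))" and "2 \<le> j" "j \<le> int n - 2" "2 \<le> l"
  shows "colour (i - 1) \<longleftrightarrow> colour (i + 1)"
proof -
  consider "j \<le> int n - int l" | "int l \<le> j" | "int n - int l < j" "j < int l" by linarith
  then show ?thesis
  proof cases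
    case 1
    have "colour (i + 1) \<longleftrightarrow> colour (i + j + (int l - 2))"
      using 1 assms by (intro colour_chord_down_up[OF chord]) auto
    moreover have "colour (i - 1) \<longleftrightarrow> colour (i + j + (int l - 2))"
      using 1 assms by (intro colour_chord_up_up[OF chord]) auto
    ultimately show ?thesis by simp
  next
    case 2
    have "colour (i - 1) \<longleftrightarrow> colour (i + j - (int l - 2))"
      using 2 assms by (intro colour_chord_up_down[OF chord]) auto
    moreover have "colour (i + 1) \<longleftrightarrow> colour (i + j - (int l - 2))"
      using 2 assms by (intro colour_chord_down_down[OF chord]) auto
    ultimately show ?thesis by simp
  next
    case 3
    then show ?thesis by (rule colour_around_long_chord[OF chord])
  qed
qed

lemma colour_around: "colour (i - 1) \<longleftrightarrow> colour (i + 1)"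
proof (cases "l = 1")
  case True
  then show ?thesis using colour_add_l[of "i - 1"] colour_add_l[of i] by simp
next
  case False
  obtain w where w: "E (cv i) w" "w \<noteq> cv (i - 1)" "w \<noteq> cv (i + 1)"
    using third_neighbour[OF cv_in_V] by blast
  show ?thesis
  proof (cases "w \<in> set C")
    case True
    then obtain j where j: "0 \<le> j" "j < int n" "cv (i + j) = w" by (rule cv_offset)
    have "j \<noteq> 0" using w(1) j(3) E_irrefl by auto
    moreover have "j \<noteq> 1" using w(3) j(3) by auto
    moreover have "j \<noteq> int n - 1"
    proof
      assume "j = int n - 1"
      then have "i + j = i - 1 + int n" by simp
      then have "cv (i + j) = cv (i - 1)" by (metis cv_eq_iff mod_add_self2)
      then show False using w(2) j(3) by simp
    qed
    ultimately show ?thesis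
      using colour_around_chord[of i j] w(1) j False l_ge_1 by simp
  next
    case False
    then show ?thesis using colour_around_off_cycle_neighbour w(1) by blast
  qed
qed

lemma colour_mod_2: "colour t \<longleftrightarrow> colour (t mod 2)"
proof -
  have "colour (s + 2) \<longleftrightarrow> colour s" for s
    using colour_around[of "s + 1"] by (simp add: algebra_simps)
  then show ?thesis by (rule periodic_int_mod[rotated]) simp
qed

lemma colour_eq_iff: "(colour s \<longleftrightarrow> colour t) \<longleftrightarrow> (colour 0 \<longleftrightarrow> colour 1) \<or> even (s - t)"
proof -
  have "t mod 2 = 0 \<or> t mod 2 = 1" "s mod 2 = 0 \<or> s mod 2 = 1" by presburger+
  moreover have "even (s - t) \<longleftrightarrow> s mod 2 = t mod 2" by presburger
  ultimately show ?thesis using colour_mod_2[of s] colour_mod_2[of t] by auto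
qed

lemma path_to_cycle_drop: "path_to_cycle q r \<Longrightarrow> k < length q \<Longrightarrow> path_to_cycle (drop k q) r"
  unfolding path_to_cycle_def using is_path_drop[of V E q k] set_drop_subset[of k "butlast q"]
  by (auto simp: butlast_drop last_drop)

lemma path_to_cycle_colour: "path_to_cycle q r \<Longrightarrow> (hd q \<in> A) \<longleftrightarrow> colour (r + int (length q) - 1)"
proof (induction "length q" arbitrary: q rule: less_induct)
  case less
  have q_path: "is_path V E q" using less.prems by (simp add: path_to_cycle_def)
  then have "q \<noteq> []" "0 < length q" by (auto simp: is_path_def)
  show ?case
  proof (cases "length q \<le> l + 1")
    case True
    \<comment> \<open>Continue along the cycle until the combined path has length l.\<close>
    define m where "m = l + 1 - length q"
    have "length q + m = l + 1" "m < n" using True l_less \<open>0 < length q\<close> unfolding m_def by linarith+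
    then have "(hd q \<in> A) \<longleftrightarrow> colour (last [r..r + int m])"
      by (intro colour_path_then_cycle_walk[where lo = r])
        (use less.prems in \<open>auto simp: hd_upto walk_edges_arc\<close>)
    also have "\<dots> \<longleftrightarrow> colour (r + 1 - int (length q))"
      using colour_add_l[of "r + 1 - int (length q)"] True
      by (simp add: last_upto m_def algebra_simps of_nat_diff)
    also have "\<dots> \<longleftrightarrow> colour (r + int (length q) - 1)"
      using colour_eq_iff[of "r + 1 - int (length q)" "r + int (length q) - 1"] by auto
    finally show ?thesis .
  next
    case False
    have "is_path V E (take (l + 1) q)" using is_path_take[OF q_path] by simp
    moreover have "path_length (take (l + 1) q) = l" using False by (simp add: path_length_def)
    moreover have "hd (take (l + 1) q) = hd q" by simp
    moreover have "last (take (l + 1) q) = q ! l"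
      using False by (simp add: take_Suc_conv_app_nth)
    ultimately have "(hd q \<in> A) \<longleftrightarrow> q ! l \<in> A" using same_side by metis
    also have "\<dots> \<longleftrightarrow> colour (r + int (length (drop l q)) - 1)"
      using less.hyps[of "drop l q"] path_to_cycle_drop[OF less.prems] False l_ge_1
      by (simp add: hd_drop_conv_nth)
    also have "\<dots> \<longleftrightarrow> colour (r + int (length q) - 1)"
      using colour_add_l[of "r + int (length (drop l q)) - 1"] False
      by (simp add: of_nat_diff algebra_simps)
    finally show ?thesis .
  qed
qed

lemma path_to_cycle_exists:
  assumes "v \<in> V"
  obtains q r where "path_to_cycle q r" "hd q = v"
proof -
  have "hd C \<in> V" using cycle C_nonempty by (auto simp: is_cycle_def)
  then obtain p where p: "is_path V E p" "hd p = v" "last p = hd C"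
    using connected assms by (auto simp: connected_graph_def)
  then have "last p \<in> set C" using C_nonempty by simp
  then obtain q where q: "is_path V E q" "hd q = v" "last q \<in> set C" "\<forall>x\<in>set (butlast q). x \<notin> set C"
    using path_first_entry[OF p(1)] p(2) by blast
  obtain r where "cv (0 + r) = last q" using cv_offset[OF q(3)] by blast
  then have "path_to_cycle q r" using q by (simp add: path_to_cycle_def)
  then show ?thesis using that q(2) by blast
qed

lemma edge_colour_path_to_cycle:
  assumes "path_to_cycle (x # q) r" "q \<noteq> []"
  shows "((x \<in> A) \<longleftrightarrow> (hd q \<in> A)) \<longleftrightarrow> (colour 0 \<longleftrightarrow> colour 1)"
proof -
  have "path_to_cycle q r" using path_to_cycle_drop[OF assms(1), of 1] assms(2) by simp
  then have "(x \<in> A) \<longleftrightarrow> colour (r + int (length q) - 1 + 1)" "(hd q \<in> A) \<longleftrightarrow> colour (r + int (length q) - 1)"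
    using path_to_cycle_colour assms(1) by fastforce+
  then show ?thesis using colour_eq_iff[of "r + int (length q) - 1 + 1" "r + int (length q) - 1"] by auto
qed

lemma edge_colour_off_cycle:
  assumes uv: "E u v" and u: "u \<notin> set C"
  shows "((u \<in> A) \<longleftrightarrow> (v \<in> A)) \<longleftrightarrow> (colour 0 \<longleftrightarrow> colour 1)"
proof -
  obtain q r where q: "path_to_cycle q r" "hd q = v"
    using path_to_cycle_exists E_in_V[OF uv] by blast
  have q_path: "is_path V E q" using q(1) by (simp add: path_to_cycle_def)
  then have "q \<noteq> []" by (simp add: is_path_def)
  show ?thesis
  proof (cases "u \<in> set q")
    case False
    then have "path_to_cycle (u # q) r"
      using q uv u \<open>q \<noteq> []\<close> E_in_V[OF uv] by (auto simp: path_to_cycle_def is_path_def walk_edges_Cons)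
    then show ?thesis using edge_colour_path_to_cycle \<open>q \<noteq> []\<close> q(2) by blast
  next
    case True
    \<comment> \<open>Then the edge closes a cycle with q; restart q at u and prepend v instead.\<close>
    then obtain s where s: "s < length q" "q ! s = u" by (auto simp: in_set_conv_nth)
    have "s \<noteq> 0" using s q(2) \<open>q \<noteq> []\<close> uv E_irrefl by (metis hd_conv_nth)
    have "v \<in> set (take s q)" using \<open>s \<noteq> 0\<close> q(2) \<open>q \<noteq> []\<close> by (cases q; cases s) auto
    then have "v \<notin> set (drop s q)" using q_path set_take_disj_set_drop_if_distinct
      by (fastforce simp: is_path_def)
    moreover have "v \<notin> set C"
    proof -
      have "v \<in> set (butlast q)" using s \<open>s \<noteq> 0\<close> q(2) by (cases q) auto
      then show ?thesis using q(1) by (simp add: path_to_cycle_def)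
    qed
    moreover have "hd (drop s q) = u" "drop s q \<noteq> []" using s by (simp_all add: hd_drop_conv_nth)
    ultimately have "path_to_cycle (v # drop s q) r"
      using path_to_cycle_drop[OF q(1) s(1)] E_sym[OF uv] E_in_V[OF uv]
      by (auto simp: path_to_cycle_def is_path_def walk_edges_Cons)
    then show ?thesis using edge_colour_path_to_cycle \<open>hd (drop s q) = u\<close> \<open>drop s q \<noteq> []\<close> by blast
  qed
qed

lemma edge_colour_chord:
  assumes chord: "E (cv a) (cv (a + j))" and "0 < j" "j < int n"
  shows "(colour a \<longleftrightarrow> colour (a + j)) \<longleftrightarrow> (colour 0 \<longleftrightarrow> colour 1)"
proof (cases "colour 0 \<longleftrightarrow> colour 1")
  case True
  then show ?thesis using colour_eq_iff by blast
next
  case False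
  define x where "x = max 0 (int l - int n + j)"
  have "colour (a + x) \<longleftrightarrow> colour (a + j + (int l - 1 - x))"
    using assms l_ge_1 l_less by (intro colour_chord_down_up[OF chord]) (auto simp: x_def)
  then have "even (j + int l - 1 - 2 * x)"
    using False colour_eq_iff[of "a + x" "a + j + (int l - 1 - x)"] by (simp add: algebra_simps)
  moreover have "even (int l)" using False colour_eq_iff[of "0 + int l" 0] colour_add_l[of 0] by simp
  ultimately have "odd j" by presburger
  then show ?thesis using False colour_eq_iff[of a "a + j"] by simp
qed

lemma edge_colour:
  assumes uv: "E u v"
  shows "((u \<in> A) \<longleftrightarrow> (v \<in> A)) \<longleftrightarrow> (colour 0 \<longleftrightarrow> colour 1)"
proof (cases "u \<in> set C \<and> v \<in> set C")
  case True
  obtain a where a: "cv (0 + a) = u" using cv_offset True by blast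
  obtain j where j: "0 \<le> j" "j < int n" "cv (a + j) = v" using cv_offset True by blast
  have "j \<noteq> 0" using a j(3) uv E_irrefl by auto
  then show ?thesis using edge_colour_chord[of a j] a j uv by (simp add: colour_def)
next
  case False
  then show ?thesis using edge_colour_off_cycle uv E_sym by blast
qed

lemma edges_monochromatic_or_alternating:
  "(\<forall>u v. E u v \<longrightarrow> (u \<in> A \<longleftrightarrow> v \<in> A)) \<or> (\<forall>u v. E u v \<longrightarrow> (u \<in> A \<longleftrightarrow> v \<notin> A))"
  using edge_colour by blast

end

theorem lemma3p2:
  fixes V :: "'a set" and E :: "'a \<Rightarrow> 'a \<Rightarrow> bool" and A B :: "'a set" and C :: "'a list"
  assumes "simple_graph V E"
    and "connected_graph V E"
    and "\<forall>x\<in>V. degree V E x \<ge> 3"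
    and "A \<union> B = V" and "A \<inter> B = {}" and "A \<noteq> {}" and "B \<noteq> {}"
    and "is_cycle V E C"
    and "\<not> bipartite_with E A B"
  shows "\<forall>l::nat. 1 \<le> l \<and> l < length C \<longrightarrow> (\<exists>p. is_AB_path V E A B p \<and> path_length p = l)"
proof (intro allI impI)
  fix l :: nat
  assume l: "1 \<le> l \<and> l < length C"
  show "\<exists>p. is_AB_path V E A B p \<and> path_length p = l"
  proof (rule ccontr)
    assume no_path: "\<nexists>p. is_AB_path V E A B p \<and> path_length p = l"
    have "hd p \<in> A \<longleftrightarrow> last p \<in> A" if p: "is_path V E p" "path_length p = l" for p
    proof -
      have "hd p \<in> V" "last p \<in> V" using p(1) by (auto simp: is_path_def)
      then show ?thesis using no_path p assms(4,5) by (auto simp: is_AB_path_def)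
    qed
    then interpret same_side_paths V E A C l
      using assms l by unfold_locales auto
    obtain a b where "a \<in> A" "b \<in> B" using assms(6,7) by blast
    then have "\<exists>u v. E u v \<and> u \<in> A \<and> v \<notin> A"
      using connected_graph_crossing_edge[OF assms(2)] assms(4,5) by blast
    then have "\<forall>u v. E u v \<longrightarrow> (u \<in> A \<longleftrightarrow> v \<notin> A)"
      using edges_monochromatic_or_alternating by blast
    then have "bipartite_with E A B"
      using E_in_V assms(4,5) by (auto simp: bipartite_with_def)
    then show False using assms(9) by blast
  qed
qed

end
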